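(* Let $G=G_1\times\cdots\times G_m$ be a direct product of virtually torsion-free groups. Suppose there exist $\alpha,\beta>0$ such that for every $i\in\{1,\dots,m\}$ and every finite $V_i\subset G_i$ such that $\langle V_i\rangle$ has exponential growth, $|V_i^n|\geqslant(\alpha|V_i|)^{\beta n}$ for every $n\in\mathbb{N}$. Then there exist $\alpha',\beta'>0$ such that for every finite $U\subset G$ at least one of the following holds: 1. $\langle U\rangle$ is contained in a direct product of the form $H_1\times H_2$, where $H_2$ does not have exponential growth and the restriction to $\langle U\rangle$ of the projection to $H_1$ is infinite-to-1; 2. $|U^n|\geqslant(\alpha'|U|)^{\beta' n}$ for every $n\in\mathbb{N}$.
   Context: For a finitely generated group $H$ with finite generating set $S$, $H$ has exponential growth if $\lim_{n\to\infty}|B_S(n)|^{1/n}>1$, where $B_S(n)$ is the word-metric ball; a group not assumed finitely generated does not have exponential growth if none of its finitely generated subgroups does. A homomorphism is infinite-to-1 if its kernel is infinite. $U^n=\{u_1\cdots u_n:u_i\in U\}$. *)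

theory Defs
  imports "HOL-Algebra.Algebra" "HOL-Analysis.Analysis"
begin

definition list_prod :: "('a, 'b) monoid_scheme \<Rightarrow> 'a list \<Rightarrow> 'a" where
  "list_prod G xs = foldr (\<lambda>x y. x \<otimes>\<^bsub>G\<^esub> y) xs \<one>\<^bsub>G\<^esub>"

definition prod_set :: "('a, 'b) monoid_scheme \<Rightarrow> 'a set \<Rightarrow> nat \<Rightarrow> 'a set" where
  "prod_set G U n = {list_prod G xs | xs. set xs \<subseteq> U \<and> length xs = n}"

definition word_ball :: "('a, 'b) monoid_scheme \<Rightarrow> 'a set \<Rightarrow> nat \<Rightarrow> 'a set" where
  "word_ball G S n = {list_prod G xs | xs.
      set xs \<subseteq> S \<union> (\<lambda>x. inv\<^bsub>G\<^esub> x) ` S \<and> length xs \<le> n}"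

text \<open>A finitely generated subgroup H has exponential growth: for a finite
  generating set S of H, lim |B_S(n)|^(1/n) > 1 (the limit is independent of S).\<close>
definition fg_exp_growth :: "('a, 'b) monoid_scheme \<Rightarrow> 'a set \<Rightarrow> bool" where
  "fg_exp_growth G H \<longleftrightarrow> (\<exists>S. finite S \<and> S \<subseteq> carrier G \<and> generate G S = H \<and>
      (\<exists>L. L > 1 \<and> (\<lambda>n. root n (real (card (word_ball G S n)))) \<longlonglongrightarrow> L))"

definition has_exp_growth :: "('a, 'b) monoid_scheme \<Rightarrow> 'a set \<Rightarrow> bool" where
  "has_exp_growth G H \<longleftrightarrow> (\<exists>S. finite S \<and> S \<subseteq> H \<and> fg_exp_growth G (generate G S))"

definition torsion_free_subgroup :: "('a, 'b) monoid_scheme \<Rightarrow> 'a set \<Rightarrow> bool" where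
  "torsion_free_subgroup G K \<longleftrightarrow>
     (\<forall>x\<in>K. x \<noteq> \<one>\<^bsub>G\<^esub> \<longrightarrow> (\<forall>n::nat. n > 0 \<longrightarrow> x [^]\<^bsub>G\<^esub> n \<noteq> \<one>\<^bsub>G\<^esub>))"

definition virtually_torsion_free :: "('a, 'b) monoid_scheme \<Rightarrow> bool" where
  "virtually_torsion_free G \<longleftrightarrow>
     (\<exists>K. subgroup K G \<and> finite (rcosets\<^bsub>G\<^esub> K) \<and> torsion_free_subgroup G K)"

end

theory Submission
  imports Defs
begin

(* For finite U let U_i be the projection of U to G_i, I the set of coordinates i for which U_i
   generates a group of exponential growth, and J the others. Growth rates exist by Fekete's
   lemma, and a word ball in a product lies in the product of the word balls of the projections,
   so the projection of <U> to the J-coordinates has no exponential growth. If the projection of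
   <U> to the I-coordinates has infinite kernel, the first alternative holds. Otherwise that
   kernel is a finite subgroup, and the finite subgroups of G have bounded order C: a finite
   subgroup meets a torsion-free subgroup trivially, so it injects into the finitely many cosets.
   Counting the fibres of the projection gives |U| <= C * prod_{i in I} |U_i| <= C * N^(m+1) with
   N = |U_i0| maximal, while |U^n| >= |U_i0^n| >= (alpha N)^(beta n); so the second alternative
   holds with alpha' = min (alpha^(m+1)) 1 / C and beta' = beta / (m+1). *)

lemma list_prod_Nil [simp]: "list_prod G [] = \<one>\<^bsub>G\<^esub>"
  by (simp add: list_prod_def)

lemma list_prod_Cons [simp]: "list_prod G (x # xs) = x \<otimes>\<^bsub>G\<^esub> list_prod G xs"
  by (simp add: list_prod_def)

lemma prod_set_eq_image: "prod_set G U n = list_prod G ` {xs. set xs \<subseteq> U \<and> length xs = n}"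
  unfolding prod_set_def by blast

lemma word_ball_eq_image:
  "word_ball G S n = list_prod G ` {xs. set xs \<subseteq> S \<union> (\<lambda>x. inv\<^bsub>G\<^esub> x) ` S \<and> length xs \<le> n}"
  unfolding word_ball_def by blast

lemma finite_prod_set: "finite U \<Longrightarrow> finite (prod_set G U n)"
  unfolding prod_set_eq_image by (intro finite_imageI finite_lists_length_eq)

lemma replicate_in_prod_set: "u \<in> U \<Longrightarrow> list_prod G (replicate n u) \<in> prod_set G U n"
  unfolding prod_set_def by force

lemma card_prod_set_ge_1: "finite U \<Longrightarrow> U \<noteq> {} \<Longrightarrow> card (prod_set G U n) \<ge> 1"
  using finite_prod_set replicate_in_prod_set
  by (metis One_nat_def Suc_leI card_gt_0_iff empty_iff ex_in_conv)

lemma map_image_lists_with_length: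
  "map f ` {xs. set xs \<subseteq> A \<and> P (length xs)} = {ys. set ys \<subseteq> f ` A \<and> P (length ys)}"
proof -
  have "{ys. set ys \<subseteq> f ` A \<and> P (length ys)} = {ys \<in> lists (f ` A). P (length ys)}"
    by auto
  also have "\<dots> = map f ` {xs \<in> lists A. P (length xs)}"
    unfolding lists_image by auto
  finally show ?thesis by auto
qed

context group begin

lemma list_prod_closed: "set xs \<subseteq> carrier G \<Longrightarrow> list_prod G xs \<in> carrier G"
  by (induction xs) auto

lemma list_prod_append:
  "set xs \<subseteq> carrier G \<Longrightarrow> set ys \<subseteq> carrier G \<Longrightarrow>
   list_prod G (xs @ ys) = list_prod G xs \<otimes> list_prod G ys"
  by (induction xs) (auto simp: m_assoc list_prod_closed)

lemma finite_word_ball: "finite S \<Longrightarrow> finite (word_ball G S n)"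
  unfolding word_ball_eq_image by (intro finite_imageI finite_lists_length_le) auto

lemma one_in_word_ball: "\<one> \<in> word_ball G S n"
  unfolding word_ball_def by (auto intro!: exI[of _ "[]"])

lemma card_word_ball_ge_1: "finite S \<Longrightarrow> card (word_ball G S n) \<ge> 1"
  using finite_word_ball one_in_word_ball
  by (metis One_nat_def Suc_leI card_gt_0_iff empty_iff)

lemma word_ball_subset_carrier: "S \<subseteq> carrier G \<Longrightarrow> word_ball G S n \<subseteq> carrier G"
  unfolding word_ball_def by (auto intro!: list_prod_closed)

lemma word_ball_mono: "a \<le> b \<Longrightarrow> word_ball G S a \<subseteq> word_ball G S b"
  unfolding word_ball_def by fastforce

lemma word_ball_mult:
  assumes "S \<subseteq> carrier G" "x \<in> word_ball G S a" "y \<in> word_ball G S b"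
  shows "x \<otimes> y \<in> word_ball G S (a + b)"
proof -
  obtain xs ys where xs: "x = list_prod G xs" "set xs \<subseteq> S \<union> (\<lambda>x. inv x) ` S" "length xs \<le> a"
    and ys: "y = list_prod G ys" "set ys \<subseteq> S \<union> (\<lambda>x. inv x) ` S" "length ys \<le> b"
    using assms(2,3) unfolding word_ball_def by blast
  have "S \<union> (\<lambda>x. inv x) ` S \<subseteq> carrier G" using assms(1) by auto
  then have "x \<otimes> y = list_prod G (xs @ ys)"
    using xs ys by (simp add: list_prod_append subset_trans)
  then show ?thesis unfolding word_ball_def using xs ys by (auto intro!: exI[of _ "xs @ ys"])
qed

lemma word_ball_add_subset:
  assumes "S \<subseteq> carrier G"
  shows "word_ball G S (a + b) \<subseteq> (\<lambda>(x, y). x \<otimes> y) ` (word_ball G S a \<times> word_ball G S b)"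
proof
  fix z assume "z \<in> word_ball G S (a + b)"
  then obtain zs where zs: "z = list_prod G zs" "set zs \<subseteq> S \<union> (\<lambda>x. inv x) ` S" "length zs \<le> a + b"
    unfolding word_ball_def by blast
  have "set zs \<subseteq> carrier G" using zs(2) assms by auto
  then have "z = list_prod G (take a zs) \<otimes> list_prod G (drop a zs)"
    using zs(1) list_prod_append[of "take a zs" "drop a zs"]
    by (metis append_take_drop_id set_drop_subset set_take_subset subset_trans)
  moreover have "list_prod G (take a zs) \<in> word_ball G S a"
    unfolding word_ball_def using zs by (auto intro!: exI[of _ "take a zs"] dest: in_set_takeD)
  moreover have "list_prod G (drop a zs) \<in> word_ball G S b"
    unfolding word_ball_def using zs by (auto intro!: exI[of _ "drop a zs"] dest: in_set_dropD)
  ultimately show "z \<in> (\<lambda>(x, y). x \<otimes> y) ` (word_ball G S a \<times> word_ball G S b)"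
    by force
qed

lemma card_word_ball_add_le:
  assumes "S \<subseteq> carrier G" "finite S"
  shows "card (word_ball G S (a + b)) \<le> card (word_ball G S a) * card (word_ball G S b)"
proof -
  have "card (word_ball G S (a + b))
        \<le> card ((\<lambda>(x, y). x \<otimes> y) ` (word_ball G S a \<times> word_ball G S b))"
    using assms by (intro card_mono finite_imageI finite_cartesian_product finite_word_ball
        word_ball_add_subset)
  also have "\<dots> \<le> card (word_ball G S a \<times> word_ball G S b)"
    using assms by (intro card_image_le finite_cartesian_product finite_word_ball)
  finally show ?thesis by (simp add: card_cartesian_product)
qed

lemma generate_in_word_ball:
  assumes "S \<subseteq> carrier G" "h \<in> generate G S"
  shows "\<exists>k. h \<in> word_ball G S k"
  using assms(2)
proof induction
  case one
  then show ?case using one_in_word_ball by blast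
next
  case (incl h)
  then have "h = list_prod G [h]" using assms(1) by auto
  then show ?case using incl unfolding word_ball_def by (auto intro!: exI[of _ 1] exI[of _ "[h]"])
next
  case (inv h)
  then have "inv h = list_prod G [inv h]" using assms(1) by auto
  then show ?case using inv unfolding word_ball_def by (auto intro!: exI[of _ 1] exI[of _ "[inv h]"])
next
  case (eng h1 h2)
  then show ?case using word_ball_mult[OF assms(1)] by blast
qed

end

context group_hom begin

lemma hom_list_prod: "set xs \<subseteq> carrier G \<Longrightarrow> h (list_prod G xs) = list_prod H (map h xs)"
  by (induction xs) (auto simp: G.list_prod_closed)

lemma image_list_prod_lists:
  assumes "A \<subseteq> carrier G"
  shows "h ` list_prod G ` {xs. set xs \<subseteq> A \<and> P (length xs)}
       = list_prod H ` {ys. set ys \<subseteq> h ` A \<and> P (length ys)}"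
proof -
  have "h ` list_prod G ` {xs. set xs \<subseteq> A \<and> P (length xs)}
      = list_prod H ` map h ` {xs. set xs \<subseteq> A \<and> P (length xs)}"
    using assms by (force simp: image_image hom_list_prod intro!: image_cong)
  then show ?thesis by (simp only: map_image_lists_with_length)
qed

lemma prod_set_image: "U \<subseteq> carrier G \<Longrightarrow> prod_set H (h ` U) n = h ` prod_set G U n"
  unfolding prod_set_eq_image by (simp add: image_list_prod_lists[where P = "\<lambda>l. l = n"])

lemma word_ball_image:
  assumes "S \<subseteq> carrier G"
  shows "word_ball H (h ` S) n = h ` word_ball G S n"
proof -
  have "h ` (S \<union> (\<lambda>x. inv\<^bsub>G\<^esub> x) ` S) = h ` S \<union> (\<lambda>x. inv\<^bsub>H\<^esub> x) ` h ` S"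
    using assms by (auto simp: image_image hom_inv subset_iff) (metis Un_iff hom_inv image_eqI)
  moreover have "S \<union> (\<lambda>x. inv\<^bsub>G\<^esub> x) ` S \<subseteq> carrier G"
    using assms by auto
  ultimately show ?thesis
    unfolding word_ball_eq_image by (simp add: image_list_prod_lists[where P = "\<lambda>l. l \<le> n"])
qed

end

lemma subadditive_le_mult_add:
  fixes b :: "nat \<Rightarrow> real"
  assumes "\<And>m n. b (m + n) \<le> b m + b n"
  shows "b (q * k + r) \<le> real q * b k + b r"
proof (induction q)
  case (Suc q)
  have "b (Suc q * k + r) \<le> b k + b (q * k + r)"
    using assms[of k "q * k + r"] by (simp add: add.assoc)
  with Suc show ?case by (simp add: algebra_simps)
qed simp

lemma fekete_subadditive:
  fixes b :: "nat \<Rightarrow> real"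
  assumes nonneg: "\<And>n. b n \<ge> 0" and subadd: "\<And>m n. b (m + n) \<le> b m + b n"
  shows "(\<lambda>n. b n / real n) \<longlonglongrightarrow> (INF n\<in>{1..}. b n / real n)"
proof (rule LIMSEQ_I)
  define l where "l = (INF n\<in>{1..}. b n / real n)"
  have bdd: "bdd_below ((\<lambda>n. b n / real n) ` {1..})"
    using nonneg by (intro bdd_belowI[of _ 0]) auto
  fix r :: real assume "r > 0"
  then have "Inf ((\<lambda>n. b n / real n) ` {1..}) < l + r / 2"
    by (simp add: l_def)
  then obtain k where k: "k \<ge> 1" "b k / real k < l + r / 2"
    using cInf_lessD[of "(\<lambda>n. b n / real n) ` {1..}"] by blast
  define M where "M = (\<Sum>j<k. b j)"
  have M: "b j \<le> M" if "j < k" for j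
    unfolding M_def using that nonneg by (intro member_le_sum) auto
  obtain N :: nat where N: "N > 2 * M / r"
    using reals_Archimedean2 by blast
  have "\<bar>b n / real n - l\<bar> < r" if n: "n \<ge> Suc N" for n
  proof -
    have npos: "real n > 0" using n by simp
    have lower: "l \<le> b n / real n"
      unfolding l_def using bdd n by (intro cINF_lower) auto
    have "b n \<le> real (n div k) * b k + b (n mod k)"
      using subadditive_le_mult_add[OF subadd, of "n div k" k "n mod k"] by simp
    also have "\<dots> \<le> real (n div k) * b k + M"
      using M k by simp
    also have "real (n div k) * b k = real (n div k) * real k * (b k / real k)"
      using k by simp
    also have "\<dots> \<le> real n * (b k / real k)"
      using nonneg k by (intro mult_right_mono) (simp_all flip: of_nat_mult)
    finally have "b n / real n \<le> b k / real k + M / real n"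
      using npos by (simp add: field_simps)
    moreover have "M / real n < r / 2"
    proof -
      have "2 * M / r < real n" using N n by simp
      then show ?thesis using \<open>r > 0\<close> npos by (simp add: field_simps)
    qed
    ultimately show ?thesis using lower k by linarith
  qed
  then show "\<exists>no. \<forall>n\<ge>no. norm (b n / real n - l) < r"
    by auto
qed

lemma fekete_submultiplicative:
  fixes a :: "nat \<Rightarrow> real"
  assumes ge_1: "\<And>n. a n \<ge> 1" and submult: "\<And>m n. a (m + n) \<le> a m * a n"
  shows "\<exists>L\<ge>1. (\<lambda>n. root n (a n)) \<longlonglongrightarrow> L"
proof -
  define b where "b n = ln (a n)" for n
  have "b (m + n) \<le> b m + b n" for m n
  proof -
    have "ln (a (m + n)) \<le> ln (a m * a n)"
      using submult[of m n] ge_1[of "m + n"] by simp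
    also have "\<dots> = ln (a m) + ln (a n)"
      using ge_1[of m] ge_1[of n] by (simp add: ln_mult)
    finally show ?thesis unfolding b_def .
  qed
  moreover have "b n \<ge> 0" for n
    using ge_1[of n] by (simp add: b_def)
  ultimately obtain l where l: "(\<lambda>n. b n / real n) \<longlonglongrightarrow> l"
    using fekete_subadditive by blast
  have "l \<ge> 0"
    using \<open>\<And>n. b n \<ge> 0\<close> by (intro LIMSEQ_le_const[OF l]) auto
  have "eventually (\<lambda>n. exp (b n / real n) = root n (a n)) sequentially"
    using eventually_gt_at_top[of 0]
  proof eventually_elim
    case (elim n)
    then have "root n (a n) = a n powr (1 / real n)"
      using ge_1[of n] by (intro root_powr_inverse) auto
    then show ?case
      using ge_1[of n] by (simp add: b_def powr_def)
  qed
  then have "(\<lambda>n. root n (a n)) \<longlonglongrightarrow> exp l"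
    using tendsto_exp[OF l] by (rule Lim_transform_eventually[rotated])
  with \<open>l \<ge> 0\<close> show ?thesis by (intro exI[of _ "exp l"]) auto
qed

(* A junk value unless the limit exists, which it does for finite S (word_ball_growth_rate). *)
definition growth_rate :: "('a, 'b) monoid_scheme \<Rightarrow> 'a set \<Rightarrow> real" where
  "growth_rate G S = lim (\<lambda>n. root n (real (card (word_ball G S n))))"

context group begin

lemma word_ball_growth_rate:
  assumes "S \<subseteq> carrier G" "finite S"
  shows "(\<lambda>n. root n (real (card (word_ball G S n)))) \<longlonglongrightarrow> growth_rate G S"
    and "growth_rate G S \<ge> 1"
proof -
  obtain L where "L \<ge> 1" and L: "(\<lambda>n. root n (real (card (word_ball G S n)))) \<longlonglongrightarrow> L"
  proof (rule fekete_submultiplicative[THEN exE])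
    show "real (card (word_ball G S n)) \<ge> 1" for n
      using card_word_ball_ge_1[OF assms(2)] by simp
    show "real (card (word_ball G S (m + n)))
          \<le> real (card (word_ball G S m)) * real (card (word_ball G S n))" for m n
      using card_word_ball_add_le[OF assms] by (simp flip: of_nat_mult)
  qed blast
  moreover have "growth_rate G S = L"
    unfolding growth_rate_def using L by (rule limI)
  ultimately show "(\<lambda>n. root n (real (card (word_ball G S n)))) \<longlonglongrightarrow> growth_rate G S"
    and "growth_rate G S \<ge> 1" by simp_all
qed

lemma word_ball_subset_word_ball_mult:
  assumes "S \<subseteq> carrier G" "finite S'" "S' \<subseteq> generate G S"
  shows "\<exists>k\<ge>1. \<forall>n. word_ball G S' n \<subseteq> word_ball G S (k * n)"
proof -
  define T where "T = S' \<union> (\<lambda>x. inv x) ` S'"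
  have "T \<subseteq> generate G S"
    using assms generate_is_subgroup[OF assms(1)] by (auto simp: T_def subgroup.m_inv_closed)
  then have "\<forall>t\<in>T. \<exists>k. t \<in> word_ball G S k"
    using generate_in_word_ball[OF assms(1)] by blast
  then obtain f where f: "\<And>t. t \<in> T \<Longrightarrow> t \<in> word_ball G S (f t)"
    by metis
  define k where "k = Suc (\<Sum>t\<in>T. f t)"
  have "finite T" using assms(2) by (simp add: T_def)
  then have T_ball: "t \<in> word_ball G S k" if "t \<in> T" for t
    using f[OF that] word_ball_mono[of "f t" k] member_le_sum[of t T f] that
    by (auto simp: k_def)
  have "list_prod G xs \<in> word_ball G S (k * length xs)" if "set xs \<subseteq> T" for xs
    using that
  proof (induction xs)
    case Nil
    then show ?case using one_in_word_ball by simp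
  next
    case (Cons y ys)
    then have "y \<otimes> list_prod G ys \<in> word_ball G S (k + k * length ys)"
      by (intro word_ball_mult[OF assms(1) T_ball]) auto
    then show ?case by simp
  qed
  then have "word_ball G S' n \<subseteq> word_ball G S (k * n)" for n
    unfolding word_ball_def[of G S'] T_def[symmetric]
    using word_ball_mono[of "k * _" "k * n" S] by fastforce
  then show ?thesis by (intro exI[of _ k]) (simp add: k_def)
qed

lemma growth_rate_eq_1_generate:
  assumes S: "S \<subseteq> carrier G" "finite S" and S': "finite S'" "S' \<subseteq> generate G S"
    and rate: "growth_rate G S = 1"
  shows "growth_rate G S' = 1"
proof -
  have S'_carrier: "S' \<subseteq> carrier G"
    using S' generate_incl[OF S(1)] by blast
  obtain k where k: "k \<ge> 1" "\<And>n. word_ball G S' n \<subseteq> word_ball G S (k * n)"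
    using word_ball_subset_word_ball_mult[OF S(1) S'] by blast
  let ?r = "\<lambda>S n. root n (real (card (word_ball G S n)))"
  have "strict_mono (\<lambda>n. k * n)"
    using k(1) by (intro strict_monoI) auto
  then have "(\<lambda>n. ?r S (k * n) ^ k) \<longlonglongrightarrow> 1 ^ k"
    using LIMSEQ_subseq_LIMSEQ[OF word_ball_growth_rate(1)[OF S]] rate
    by (intro tendsto_power) (simp add: o_def)
  moreover have "?r S' n \<le> ?r S (k * n) ^ k" if "n \<ge> 1" for n
  proof -
    have "card (word_ball G S' n) \<le> card (word_ball G S (k * n))"
      by (intro card_mono finite_word_ball S k)
    then have "?r S' n \<le> root n (real (card (word_ball G S (k * n))))"
      using that by (intro real_root_le_mono) auto
    also have "\<dots> = root k (root n (real (card (word_ball G S (k * n))))) ^ k"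
      using k(1) by (intro real_root_pow_pos2[symmetric] real_root_ge_zero) auto
    also have "\<dots> = ?r S (k * n) ^ k"
      by (simp add: real_root_mult_exp)
    finally show ?thesis .
  qed
  ultimately have "growth_rate G S' \<le> 1"
    using word_ball_growth_rate(1)[OF S'_carrier S'(1)] by (intro LIMSEQ_le) auto
  with word_ball_growth_rate(2)[OF S'_carrier S'(1)] show ?thesis by simp
qed

lemma not_has_exp_growth_generate:
  assumes "S \<subseteq> carrier G" "finite S" "growth_rate G S = 1"
  shows "\<not> has_exp_growth G (generate G S)"
proof
  assume "has_exp_growth G (generate G S)"
  then obtain S0 S' L where S0: "S0 \<subseteq> generate G S"
    and S': "finite S'" "S' \<subseteq> carrier G" "generate G S' = generate G S0"
    and L: "L > 1" "(\<lambda>n. root n (real (card (word_ball G S' n)))) \<longlonglongrightarrow> L"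
    unfolding has_exp_growth_def fg_exp_growth_def by blast
  have "S' \<subseteq> generate G S"
    using S0 S'(3) generate.incl[of _ S' G]
      generate_subgroup_incl[OF _ generate_is_subgroup[OF assms(1)]] by blast
  then have "growth_rate G S' = 1"
    using growth_rate_eq_1_generate assms S'(1) by blast
  moreover have "growth_rate G S' = L"
    using L(2) word_ball_growth_rate(1)[OF S'(2,1)] LIMSEQ_unique by blast
  ultimately show False using L(1) by simp
qed

lemma fg_exp_growth_generate:
  assumes "S \<subseteq> carrier G" "finite S" "growth_rate G S > 1"
  shows "fg_exp_growth G (generate G S)"
  unfolding fg_exp_growth_def using assms word_ball_growth_rate(1)[OF assms(1,2)] by blast

end

lemma group_hom_product_group_proj:
  assumes "i \<in> I" "\<And>i. i \<in> I \<Longrightarrow> group (G i)"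
  shows "group_hom (product_group I G) (G i) (\<lambda>x. x i)"
  using assms by (intro group_hom.intro group_hom_axioms.intro homI) (auto simp: PiE_iff)

lemma group_hom_product_group_restrict:
  assumes "J \<subseteq> I" "\<And>i. i \<in> I \<Longrightarrow> group (G i)"
  shows "group_hom (product_group I G) (product_group J G) (\<lambda>x. restrict x J)"
proof (intro group_hom.intro group_hom_axioms.intro homI)
  show "group (product_group J G)"
    using assms by (intro product_group) blast
  show "restrict (x \<otimes>\<^bsub>product_group I G\<^esub> y) J
      = restrict x J \<otimes>\<^bsub>product_group J G\<^esub> restrict y J" for x y
    using assms(1) by (auto simp: fun_eq_iff)
qed (use assms in \<open>auto simp: PiE_iff\<close>)

lemma word_ball_product_group_subset:
  assumes "\<And>j. j \<in> J \<Longrightarrow> group (G j)" "T \<subseteq> carrier (product_group J G)"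
  shows "word_ball (product_group J G) T n \<subseteq> (\<Pi>\<^sub>E j\<in>J. word_ball (G j) ((\<lambda>x. x j) ` T) n)"
proof
  fix x assume x: "x \<in> word_ball (product_group J G) T n"
  interpret P: group "product_group J G" using assms(1) by simp
  have "x \<in> carrier (product_group J G)"
    using x P.word_ball_subset_carrier[OF assms(2)] by blast
  moreover have "x j \<in> word_ball (G j) ((\<lambda>x. x j) ` T) n" if "j \<in> J" for j
    using x group_hom.word_ball_image[OF group_hom_product_group_proj[OF that assms(1)] assms(2)]
    by blast
  ultimately show "x \<in> (\<Pi>\<^sub>E j\<in>J. word_ball (G j) ((\<lambda>x. x j) ` T) n)"
    by (auto simp: PiE_iff)
qed

lemma real_root_prod:
  assumes "finite J" "n > 0" "\<And>j. j \<in> J \<Longrightarrow> f j \<ge> 0"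
  shows "root n (\<Prod>j\<in>J. f j) = (\<Prod>j\<in>J. root n (f j))"
  using assms(1,3) by (induction J rule: finite_induct) (use assms(2) in \<open>auto simp: real_root_mult\<close>)

lemma growth_rate_product_group:
  assumes J: "finite J" and grp: "\<And>j. j \<in> J \<Longrightarrow> group (G j)"
    and T: "T \<subseteq> carrier (product_group J G)" "finite T"
    and rate: "\<And>j. j \<in> J \<Longrightarrow> growth_rate (G j) ((\<lambda>x. x j) ` T) = 1"
  shows "growth_rate (product_group J G) T = 1"
proof -
  let ?P = "product_group J G" and ?T = "\<lambda>j. (\<lambda>x. x j) ` T"
  interpret P: group ?P using grp by simp
  have T_j: "?T j \<subseteq> carrier (G j)" "finite (?T j)" if "j \<in> J" for j
    using T that by (auto simp: PiE_iff)
  have "(\<lambda>n. \<Prod>j\<in>J. root n (real (card (word_ball (G j) (?T j) n)))) \<longlonglongrightarrow> (\<Prod>j\<in>J. 1)"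
    using group.word_ball_growth_rate(1)[OF grp T_j] rate by (intro tendsto_prod) auto
  moreover have "root n (real (card (word_ball ?P T n)))
      \<le> (\<Prod>j\<in>J. root n (real (card (word_ball (G j) (?T j) n))))" if "n \<ge> 1" for n
  proof -
    have "card (word_ball ?P T n) \<le> card (\<Pi>\<^sub>E j\<in>J. word_ball (G j) (?T j) n)"
      using J T_j by (intro card_mono finite_PiE group.finite_word_ball[OF grp]
          word_ball_product_group_subset[OF grp T(1)]) auto
    then have "real (card (word_ball ?P T n)) \<le> (\<Prod>j\<in>J. real (card (word_ball (G j) (?T j) n)))"
      by (simp add: card_PiE[OF J] flip: of_nat_prod)
    then show ?thesis
      using that J by (subst real_root_prod[symmetric]) (auto intro: real_root_le_mono)
  qed
  ultimately have "growth_rate ?P T \<le> 1"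
    using P.word_ball_growth_rate(1)[OF T] by (intro LIMSEQ_le) auto
  with P.word_ball_growth_rate(2)[OF T] show ?thesis by simp
qed

lemma (in group) card_subgroup_le_card_rcosets:
  assumes K: "subgroup K G" "finite (rcosets K)" and F: "subgroup F G" and KF: "K \<inter> F \<subseteq> {\<one>}"
  shows "card F \<le> card (rcosets K)"
proof -
  have "inj_on (\<lambda>f. K #> f) F"
  proof (rule inj_onI)
    fix f g assume fg: "f \<in> F" "g \<in> F" "K #> f = K #> g"
    then have carrier: "f \<in> carrier G" "g \<in> carrier G"
      using subgroup.subset[OF F] by auto
    then have "f \<otimes> inv g \<in> K"
      using fg(3) rcos_self[OF carrier(1) K(1)] subgroup.rcos_module_imp[OF K(1) is_group] by simp
    moreover have "f \<otimes> inv g \<in> F"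
      using fg F by (simp add: subgroup.m_closed subgroup.m_inv_closed)
    ultimately have "f \<otimes> inv g = \<one>" using KF by blast
    then show "f = g" using carrier by (metis inv_solve_right' l_one one_closed)
  qed
  moreover have "(\<lambda>f. K #> f) ` F \<subseteq> rcosets K"
    using rcosetsI[OF subgroup.subset[OF K(1)]] subgroup.subset[OF F] by blast
  ultimately show ?thesis using K(2) by (rule card_inj_on_le)
qed

lemma (in group) torsion_free_Int_finite_subgroup:
  assumes "torsion_free_subgroup G K" "subgroup F G" "finite F"
  shows "K \<inter> F \<subseteq> {\<one>}"
proof
  fix x assume x: "x \<in> K \<inter> F"
  then have "x \<in> carrier G" using subgroup.subset[OF assms(2)] by blast
  moreover have "carrier (subgroup_generated G {x}) \<subseteq> F"
    using x assms(2) \<open>x \<in> carrier G\<close>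
    by (auto simp: carrier_subgroup_generated intro: generate_subgroup_incl[THEN subsetD])
  ultimately obtain n :: nat where "n \<noteq> 0" "x [^] n = \<one>"
    using finite_cyclic_subgroup assms(3) finite_subset by blast
  then show "x \<in> {\<one>}"
    using assms(1) x unfolding torsion_free_subgroup_def by auto
qed

lemma (in group) virtually_torsion_free_finite_subgroups_bounded:
  assumes "virtually_torsion_free G"
  shows "\<exists>c\<ge>1. \<forall>F. subgroup F G \<and> finite F \<longrightarrow> card F \<le> c"
proof -
  obtain K where K: "subgroup K G" "finite (rcosets K)" "torsion_free_subgroup G K"
    using assms unfolding virtually_torsion_free_def by blast
  have "rcosets K \<noteq> {}"
    using rcosetsI[OF subgroup.subset[OF K(1)] one_closed] by blast
  then have "card (rcosets K) \<ge> 1"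
    using K(2) by (simp add: Suc_le_eq card_gt_0_iff)
  moreover have "card F \<le> card (rcosets K)" if "subgroup F G" "finite F" for F
    using card_subgroup_le_card_rcosets[OF K(1,2) that(1)]
      torsion_free_Int_finite_subgroup[OF K(3) that] .
  ultimately show ?thesis by blast
qed

lemma card_finite_subgroup_product_group_le:
  assumes I: "finite I" and grp: "\<And>i. i \<in> I \<Longrightarrow> group (G i)"
    and bound: "\<And>i F. i \<in> I \<Longrightarrow> subgroup F (G i) \<Longrightarrow> finite F \<Longrightarrow> card F \<le> c i"
    and F: "subgroup F (product_group I G)" "finite F"
  shows "card F \<le> (\<Prod>i\<in>I. c i)"
proof -
  have "F \<subseteq> (\<Pi>\<^sub>E i\<in>I. (\<lambda>x. x i) ` F)"
    using subgroup.subset[OF F(1)] by (force simp: PiE_iff)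
  then have "card F \<le> card (\<Pi>\<^sub>E i\<in>I. (\<lambda>x. x i) ` F)"
    by (rule card_mono[rotated]) (use F(2) I in \<open>auto intro: finite_PiE\<close>)
  also have "\<dots> = (\<Prod>i\<in>I. card ((\<lambda>x. x i) ` F))"
    by (rule card_PiE[OF I])
  also have "\<dots> \<le> (\<Prod>i\<in>I. c i)"
  proof (rule prod_mono)
    fix i assume i: "i \<in> I"
    have "subgroup ((\<lambda>x. x i) ` F) (G i)"
      using group_hom.subgroup_img_is_subgroup[OF group_hom_product_group_proj[OF i grp] F(1)] .
    then show "0 \<le> card ((\<lambda>x. x i) ` F) \<and> card ((\<lambda>x. x i) ` F) \<le> c i"
      using bound[OF i] F(2) by simp
  qed
  finally show ?thesis .
qed

lemma product_group_finite_subgroups_bounded: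
  assumes "finite I" "\<And>i. i \<in> I \<Longrightarrow> group (G i)" "\<And>i. i \<in> I \<Longrightarrow> virtually_torsion_free (G i)"
  shows "\<exists>C\<ge>1. \<forall>F. subgroup F (product_group I G) \<and> finite F \<longrightarrow> card F \<le> C"
proof -
  have "\<forall>i\<in>I. \<exists>c\<ge>1. \<forall>F. subgroup F (G i) \<and> finite F \<longrightarrow> card F \<le> c"
    using group.virtually_torsion_free_finite_subgroups_bounded[OF assms(2,3)] by blast
  from bchoice[OF this] obtain c
    where c: "\<forall>i\<in>I. c i \<ge> 1 \<and> (\<forall>F. subgroup F (G i) \<and> finite F \<longrightarrow> card F \<le> c i)"
    by blast
  then have "(\<Prod>i\<in>I. c i) \<ge> 1"
    by (intro prod_ge_1) auto
  moreover have "card F \<le> (\<Prod>i\<in>I. c i)" if "subgroup F (product_group I G)" "finite F" for F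
    using c by (intro card_finite_subgroup_product_group_le[OF assms(1,2) _ that]) auto
  ultimately show ?thesis by blast
qed

lemma (in group_hom) card_le_card_image_mult_card_kernel:
  assumes U: "finite U" "U \<subseteq> carrier G" and fin: "finite (generate G U \<inter> kernel G H h)"
  shows "card U \<le> card (h ` U) * card (generate G U \<inter> kernel G H h)"
proof -
  define s where "s = inv_into U h"
  define \<phi> where "\<phi> x = (h x, x \<otimes>\<^bsub>G\<^esub> inv\<^bsub>G\<^esub> s (h x))" for x
  have s: "s (h x) \<in> U" "h (s (h x)) = h x" if "x \<in> U" for x
    using that by (simp_all add: s_def inv_into_into f_inv_into_f)
  have "inj_on \<phi> U"
  proof (rule inj_onI)
    fix x y assume xy: "x \<in> U" "y \<in> U" "\<phi> x = \<phi> y"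
    then have "h x = h y" "x \<otimes>\<^bsub>G\<^esub> inv\<^bsub>G\<^esub> s (h x) = y \<otimes>\<^bsub>G\<^esub> inv\<^bsub>G\<^esub> s (h y)"
      by (auto simp: \<phi>_def)
    then show "x = y"
      using xy(1,2) s(1)[OF xy(1)] U(2) by (auto simp: subset_iff G.right_cancel)
  qed
  moreover have "\<phi> x \<in> h ` U \<times> (generate G U \<inter> kernel G H h)" if x: "x \<in> U" for x
  proof -
    have "x \<in> carrier G" "s (h x) \<in> carrier G" using U(2) s(1) x by auto
    moreover have "x \<otimes>\<^bsub>G\<^esub> inv\<^bsub>G\<^esub> s (h x) \<in> generate G U"
      using x s(1)[OF x] by (simp add: generate.eng generate.incl generate.inv)
    ultimately show ?thesis
      using x s(2)[OF x] by (simp add: \<phi>_def kernel_def)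
  qed
  ultimately have "card U \<le> card (h ` U \<times> (generate G U \<inter> kernel G H h))"
    using U(1) fin by (intro card_inj_on_le) blast+
  then show ?thesis by (simp add: card_cartesian_product)
qed

lemma (in group_hom) card_prod_set_image_le:
  "U \<subseteq> carrier G \<Longrightarrow> finite U \<Longrightarrow> card (prod_set H (h ` U) n) \<le> card (prod_set G U n)"
  by (simp add: prod_set_image card_image_le finite_prod_set)

lemma powr_div_le_powr_if_le_power:
  fixes a b e :: real
  assumes "0 \<le> a" "a \<le> b ^ k" "b > 0" "k > 0" "e \<ge> 0"
  shows "a powr (e / real k) \<le> b powr e"
proof -
  have "a powr (e / real k) \<le> (b ^ k) powr (e / real k)"
    using assms by (intro powr_mono2) auto
  also have "\<dots> = b powr e"
    using assms by (simp add: powr_realpow[symmetric] powr_powr)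
  finally show ?thesis .
qed

definition product_set_growth :: "('a, 'b) monoid_scheme \<Rightarrow> real \<Rightarrow> real \<Rightarrow> bool" where
  "product_set_growth G \<alpha> \<beta> \<longleftrightarrow>
     (\<forall>V. finite V \<and> V \<subseteq> carrier G \<and> fg_exp_growth G (generate G V) \<longrightarrow>
       (\<forall>n::nat. real (card (prod_set G V n)) \<ge> (\<alpha> * real (card V)) powr (\<beta> * real n)))"

lemma product_group_infinite_kernel_alternative:
  assumes grp: "\<And>i. i \<in> M \<Longrightarrow> group (G i)" and M: "finite M"
    and U: "U \<subseteq> carrier (product_group M G)" "finite U"
    and IJ: "I \<union> J = M" "I \<inter> J = {}"
    and rate: "\<And>j. j \<in> J \<Longrightarrow> growth_rate (G j) ((\<lambda>x. x j) ` U) = 1"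
    and kernel: "infinite {x \<in> generate (product_group M G) U. restrict x I = \<one>\<^bsub>product_group I G\<^esub>}"
  shows "\<exists>I J H1 H2. I \<union> J = M \<and> I \<inter> J = {} \<and>
          subgroup H1 (product_group I G) \<and> subgroup H2 (product_group J G) \<and>
          (\<forall>x\<in>generate (product_group M G) U. restrict x I \<in> H1 \<and> restrict x J \<in> H2) \<and>
          \<not> has_exp_growth (product_group J G) H2 \<and>
          infinite {x \<in> generate (product_group M G) U. restrict x I = \<one>\<^bsub>product_group I G\<^esub>}"
proof -
  let ?P = "product_group M G" and ?PI = "product_group I G" and ?PJ = "product_group J G"
  interpret hI: group_hom ?P ?PI "\<lambda>x. restrict x I"
    using IJ grp by (intro group_hom_product_group_restrict) auto
  interpret hJ: group_hom ?P ?PJ "\<lambda>x. restrict x J"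
    using IJ grp by (intro group_hom_product_group_restrict) auto
  define T where "T = (\<lambda>x. restrict x J) ` U"
  have T: "T \<subseteq> carrier ?PJ" "finite T"
    unfolding T_def using U hJ.hom_closed by blast+
  have "(\<lambda>x. x j) ` T = (\<lambda>x. x j) ` U" if "j \<in> J" for j
    using that by (force simp: T_def image_image)
  then have "growth_rate ?PJ T = 1"
    using IJ M grp rate by (intro growth_rate_product_group T) auto
  then have "\<not> has_exp_growth ?PJ (generate ?PJ T)"
    by (intro hJ.H.not_has_exp_growth_generate T)
  moreover have "generate ?PJ T = (\<lambda>x. restrict x J) ` generate ?P U"
    unfolding T_def using U(1) by (rule hJ.generate_img)
  moreover have "restrict x I \<in> carrier ?PI" if "x \<in> generate ?P U" for x
    using that hI.G.generate_incl[OF U(1)] hI.hom_closed by blast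
  ultimately show ?thesis
    using IJ kernel hI.H.subgroup_self hJ.H.generate_is_subgroup[OF T(1)]
    by (intro exI[of _ I] exI[of _ J] exI[of _ "carrier ?PI"] exI[of _ "generate ?PJ T"]) auto
qed

lemma card_le_mult_prod_card_proj_of_finite_kernel:
  assumes grp: "\<And>i. i \<in> M \<Longrightarrow> group (G i)" and I: "finite I" "I \<subseteq> M"
    and U: "U \<subseteq> carrier (product_group M G)" "finite U"
    and bound: "\<And>F. subgroup F (product_group M G) \<Longrightarrow> finite F \<Longrightarrow> card F \<le> C"
    and kernel: "finite {x \<in> generate (product_group M G) U. restrict x I = \<one>\<^bsub>product_group I G\<^esub>}"
  shows "card U \<le> C * (\<Prod>i\<in>I. card ((\<lambda>x. x i) ` U))"
proof -
  let ?P = "product_group M G" and ?PI = "product_group I G"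
  interpret P: group ?P using grp by simp
  interpret hI: group_hom ?P ?PI "\<lambda>x. restrict x I"
    using I(2) grp by (rule group_hom_product_group_restrict)
  let ?K = "generate ?P U \<inter> kernel ?P ?PI (\<lambda>x. restrict x I)"
  have K_eq: "?K = {x \<in> generate ?P U. restrict x I = \<one>\<^bsub>?PI\<^esub>}"
    using P.generate_incl[OF U(1)] by (auto simp: kernel_def)
  have "subgroup ?K ?P"
    using P.generate_is_subgroup[OF U(1)] hI.subgroup_kernel by (rule P.subgroups_Inter_pair)
  then have card_K: "card ?K \<le> C"
    using bound kernel K_eq by simp
  have "(\<lambda>x. restrict x I) ` U \<subseteq> (\<Pi>\<^sub>E i\<in>I. (\<lambda>x. x i) ` U)"
    by (auto simp: PiE_iff)
  then have "card ((\<lambda>x. restrict x I) ` U) \<le> card (\<Pi>\<^sub>E i\<in>I. (\<lambda>x. x i) ` U)"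
    by (rule card_mono[rotated]) (use I(1) U(2) in \<open>auto intro: finite_PiE\<close>)
  then have "card ((\<lambda>x. restrict x I) ` U) * card ?K \<le> (\<Prod>i\<in>I. card ((\<lambda>x. x i) ` U)) * C"
    using card_K by (simp add: card_PiE[OF I(1)] mult_le_mono)
  moreover have "card U \<le> card ((\<lambda>x. restrict x I) ` U) * card ?K"
    using hI.card_le_card_image_mult_card_kernel[OF U(2,1)] kernel K_eq by simp
  ultimately show ?thesis
    by (simp add: mult.commute)
qed

lemma card_prod_set_product_group_ge_proj:
  assumes grp: "\<And>i. i \<in> M \<Longrightarrow> group (G i)" and "i \<in> M"
    and U: "U \<subseteq> carrier (product_group M G)" "finite U"
    and growth: "product_set_growth (G i) \<alpha> \<beta>" and rate: "growth_rate (G i) ((\<lambda>x. x i) ` U) > 1"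
  shows "(\<alpha> * real (card ((\<lambda>x. x i) ` U))) powr (\<beta> * real n)
         \<le> real (card (prod_set (product_group M G) U n))"
proof -
  interpret hom: group_hom "product_group M G" "G i" "\<lambda>x. x i"
    using \<open>i \<in> M\<close> grp by (rule group_hom_product_group_proj)
  have "(\<lambda>x. x i) ` U \<subseteq> carrier (G i)" "finite ((\<lambda>x. x i) ` U)"
    using hom.hom_closed U by auto
  moreover have "fg_exp_growth (G i) (generate (G i) ((\<lambda>x. x i) ` U))"
    using hom.H.fg_exp_growth_generate calculation rate by blast
  ultimately have "(\<alpha> * real (card ((\<lambda>x. x i) ` U))) powr (\<beta> * real n)
      \<le> real (card (prod_set (G i) ((\<lambda>x. x i) ` U) n))"
    using growth unfolding product_set_growth_def by blast
  also have "\<dots> \<le> real (card (prod_set (product_group M G) U n))"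
    using hom.card_prod_set_image_le[OF U] by simp
  finally show ?thesis .
qed

lemma card_prod_set_product_group_ge_of_card_le_prod:
  fixes \<alpha> \<beta> :: real and C k :: nat
  assumes grp: "\<And>i. i \<in> M \<Longrightarrow> group (G i)" and I: "finite I" "I \<subseteq> M" "I \<noteq> {}" "card I \<le> k"
    and U: "U \<subseteq> carrier (product_group M G)" "finite U" "U \<noteq> {}"
    and growth: "\<And>i. i \<in> I \<Longrightarrow> product_set_growth (G i) \<alpha> \<beta>" and pos: "\<alpha> > 0" "\<beta> > 0"
    and rate: "\<And>i. i \<in> I \<Longrightarrow> growth_rate (G i) ((\<lambda>x. x i) ` U) > 1"
    and "C \<ge> 1" and card_U: "card U \<le> C * (\<Prod>i\<in>I. card ((\<lambda>x. x i) ` U))"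
  shows "(min (\<alpha> ^ k) 1 / real C * real (card U)) powr (\<beta> * real n / real k)
         \<le> real (card (prod_set (product_group M G) U n))"
proof -
  let ?U = "\<lambda>i. (\<lambda>x. x i) ` U"
  define A where "A = min (\<alpha> ^ k) 1 / real C * real (card U)"
  define N where "N = Max (card ` ?U ` I)"
  have "N \<in> card ` ?U ` I"
    unfolding N_def using I by (intro Max_in) auto
  then obtain i0 where i0: "i0 \<in> I" "card (?U i0) = N"
    by blast
  have "N \<ge> 1"
    using i0 U by (auto simp: Suc_le_eq card_gt_0_iff)
  have "(\<Prod>i\<in>I. card (?U i)) \<le> (\<Prod>i\<in>I. N)"
    using I(1) by (intro prod_mono) (auto simp: N_def)
  then have "card U \<le> C * N ^ card I"
    using card_U by (simp add: le_trans)
  also have "\<dots> \<le> C * N ^ k"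
    using \<open>N \<ge> 1\<close> I(4) by (intro mult_le_mono2 power_increasing) auto
  finally have "real (card U) \<le> real C * real N ^ k"
    by (simp flip: of_nat_power of_nat_mult)
  then have "A \<le> \<alpha> ^ k / real C * (real C * real N ^ k)"
    unfolding A_def using pos by (intro mult_mono divide_right_mono) auto
  also have "\<dots> = (\<alpha> * N) ^ k"
    using \<open>C \<ge> 1\<close> by (simp add: power_mult_distrib)
  finally have "A powr (\<beta> * real n / real k) \<le> (\<alpha> * N) powr (\<beta> * real n)"
    using \<open>N \<ge> 1\<close> pos I(3,4) card_gt_0_iff[of I] I(1)
    by (intro powr_div_le_powr_if_le_power) (auto simp: A_def)
  also have "\<dots> \<le> real (card (prod_set (product_group M G) U n))"
    using card_prod_set_product_group_ge_proj[OF grp _ U(1,2) growth rate] i0 I(2) by blast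
  finally show ?thesis
    unfolding A_def .
qed

lemma card_prod_set_product_group_lower_bound:
  fixes \<alpha> \<beta> :: real
  assumes grp: "\<And>i. i \<in> M \<Longrightarrow> group (G i)" and M: "finite M" and I: "I \<subseteq> M"
    and U: "U \<subseteq> carrier (product_group M G)" "finite U"
    and growth: "\<And>i. i \<in> I \<Longrightarrow> product_set_growth (G i) \<alpha> \<beta>" and pos: "\<alpha> > 0" "\<beta> > 0"
    and rate: "\<And>i. i \<in> I \<Longrightarrow> growth_rate (G i) ((\<lambda>x. x i) ` U) > 1"
    and bound: "\<And>F. subgroup F (product_group M G) \<Longrightarrow> finite F \<Longrightarrow> card F \<le> C" and "C \<ge> 1"
    and kernel: "finite {x \<in> generate (product_group M G) U. restrict x I = \<one>\<^bsub>product_group I G\<^esub>}"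
  shows "(min (\<alpha> ^ Suc (card M)) 1 / real C * real (card U)) powr (\<beta> / real (Suc (card M)) * real n)
         \<le> real (card (prod_set (product_group M G) U n))"
proof -
  define A where "A = min (\<alpha> ^ Suc (card M)) 1 / real C * real (card U)"
  have "finite I" using M I finite_subset by blast
  have card_U: "card U \<le> C * (\<Prod>i\<in>I. card ((\<lambda>x. x i) ` U))"
    using card_le_mult_prod_card_proj_of_finite_kernel[OF grp \<open>finite I\<close> I U bound kernel] .
  have "card I \<le> Suc (card M)"
    using card_mono[OF M I] by simp
  consider "U = {}" | "U \<noteq> {}" "I = {}" | "U \<noteq> {}" "I \<noteq> {}" by blast
  then have "A powr (\<beta> * real n / real (Suc (card M))) \<le> real (card (prod_set (product_group M G) U n))"
  proof cases
    case 1
    then show ?thesis by (simp add: A_def)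
  next
    case 2
    have "A \<le> 1 / real C * real (card U)"
      unfolding A_def by (intro mult_right_mono divide_right_mono) auto
    also have "\<dots> \<le> 1"
      using card_U 2(2) \<open>C \<ge> 1\<close> by (simp add: field_simps)
    finally have "A powr (\<beta> * real n / real (Suc (card M))) \<le> 1"
      using pos by (intro powr_le1) (auto simp: A_def)
    moreover have "1 \<le> real (card (prod_set (product_group M G) U n))"
      using card_prod_set_ge_1[OF U(2) 2(1)] by simp
    ultimately show ?thesis by linarith
  next
    case 3
    then show ?thesis
      unfolding A_def
      using card_prod_set_product_group_ge_of_card_le_prod[OF grp \<open>finite I\<close> I _ _ U _ growth pos rate
          \<open>C \<ge> 1\<close> card_U] \<open>card I \<le> Suc (card M)\<close>
      by blast
  qed
  then show ?thesis
    unfolding A_def by simp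
qed

lemma product_group_growth_alternative:
  fixes \<alpha> \<beta> :: real
  assumes grp: "\<And>i. i \<in> M \<Longrightarrow> group (G i)" and M: "finite M"
    and growth: "\<And>i. i \<in> M \<Longrightarrow> product_set_growth (G i) \<alpha> \<beta>" and pos: "\<alpha> > 0" "\<beta> > 0"
    and bound: "\<And>F. subgroup F (product_group M G) \<Longrightarrow> finite F \<Longrightarrow> card F \<le> C" and "C \<ge> 1"
    and U: "U \<subseteq> carrier (product_group M G)" "finite U"
  shows "(\<exists>I J H1 H2. I \<union> J = M \<and> I \<inter> J = {} \<and>
          subgroup H1 (product_group I G) \<and> subgroup H2 (product_group J G) \<and>
          (\<forall>x\<in>generate (product_group M G) U. restrict x I \<in> H1 \<and> restrict x J \<in> H2) \<and>
          \<not> has_exp_growth (product_group J G) H2 \<and>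
          infinite {x \<in> generate (product_group M G) U. restrict x I = \<one>\<^bsub>product_group I G\<^esub>})
      \<or> (\<forall>n::nat. real (card (prod_set (product_group M G) U n))
           \<ge> (min (\<alpha> ^ Suc (card M)) 1 / real C * real (card U)) powr (\<beta> / real (Suc (card M)) * real n))"
proof -
  define I where "I = {i \<in> M. growth_rate (G i) ((\<lambda>x. x i) ` U) > 1}"
  have "growth_rate (G j) ((\<lambda>x. x j) ` U) = 1" if "j \<in> M - I" for j
    using group.word_ball_growth_rate(2)[OF grp, of j "(\<lambda>x. x j) ` U"] that U
    by (force simp: I_def PiE_iff)
  then have rate: "\<And>j. j \<in> M - I \<Longrightarrow> growth_rate (G j) ((\<lambda>x. x j) ` U) = 1" .
  show ?thesis
  proof (cases "finite {x \<in> generate (product_group M G) U. restrict x I = \<one>\<^bsub>product_group I G\<^esub>}")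
    case True
    have "(min (\<alpha> ^ Suc (card M)) 1 / real C * real (card U)) powr (\<beta> / real (Suc (card M)) * real n)
        \<le> real (card (prod_set (product_group M G) U n))" for n
      by (rule card_prod_set_product_group_lower_bound[OF grp M _ U _ pos _ bound \<open>C \<ge> 1\<close> True])
        (auto simp: I_def intro: growth)
    then show ?thesis by simp
  next
    case False
    have "I \<union> (M - I) = M" "I \<inter> (M - I) = {}"
      by (auto simp: I_def)
    then show ?thesis
      using product_group_infinite_kernel_alternative[OF grp M U _ _ rate False] by blast
  qed
qed

theorem proposition2p28:
  fixes G :: "nat \<Rightarrow> ('b, 'c) monoid_scheme" and m :: nat and \<alpha> \<beta> :: real
  assumes grp: "\<forall>i\<in>{1..m}. group (G i)"
    and vtf: "\<forall>i\<in>{1..m}. virtually_torsion_free (G i)"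
    and pos: "\<alpha> > 0" "\<beta> > 0"
    and growth: "\<forall>i\<in>{1..m}. \<forall>V. finite V \<and> V \<subseteq> carrier (G i) \<and>
                   fg_exp_growth (G i) (generate (G i) V) \<longrightarrow>
                   (\<forall>n::nat. real (card (prod_set (G i) V n)) \<ge> (\<alpha> * real (card V)) powr (\<beta> * real n))"
  shows "\<exists>\<alpha>' \<beta>' :: real. \<alpha>' > 0 \<and> \<beta>' > 0 \<and>
    (\<forall>U. finite U \<and> U \<subseteq> carrier (product_group {1..m} G) \<longrightarrow>
      (\<exists>I J H1 H2. I \<union> J = {1..m} \<and> I \<inter> J = {} \<and>
          subgroup H1 (product_group I G) \<and> subgroup H2 (product_group J G) \<and>
          (\<forall>x\<in>generate (product_group {1..m} G) U. restrict x I \<in> H1 \<and> restrict x J \<in> H2) \<and>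
          \<not> has_exp_growth (product_group J G) H2 \<and>
          infinite {x \<in> generate (product_group {1..m} G) U.
                      restrict x I = \<one>\<^bsub>product_group I G\<^esub>})
      \<or> (\<forall>n::nat. real (card (prod_set (product_group {1..m} G) U n))
                    \<ge> (\<alpha>' * real (card U)) powr (\<beta>' * real n)))"
proof -
  let ?M = "{1..m}"
  have grp: "\<And>i. i \<in> ?M \<Longrightarrow> group (G i)"
    and growth: "\<And>i. i \<in> ?M \<Longrightarrow> product_set_growth (G i) \<alpha> \<beta>"
    using grp growth by (auto simp: product_set_growth_def)
  obtain C where C: "C \<ge> 1" "\<And>F. subgroup F (product_group ?M G) \<Longrightarrow> finite F \<Longrightarrow> card F \<le> C"
    using product_group_finite_subgroups_bounded[of ?M G] grp vtf by auto
  show ?thesis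
  proof (rule exI[of _ "min (\<alpha> ^ Suc m) 1 / real C"], rule exI[of _ "\<beta> / real (Suc m)"],
      intro conjI allI impI, goal_cases)
    case (3 U)
    then show ?case
      using product_group_growth_alternative[where M = ?M and G = G and U = U,
          OF grp _ growth pos C(2,1)]
      by simp
  qed (use pos C(1) in auto)
qed

end
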